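(* Let $d\ge2$ and let $\mathcal{H}$ be a $d$-uniform simple hypergraph such that any two distinct edges $S,S'$ with $S\cap S'\neq\emptyset$ satisfy $|S\cap S'|=d-1$. Let $x$ be a simplicial vertex of $\mathcal{H}$ and $S$ an edge of $\mathcal{H}$ containing $x$. If $\mathcal{S}$ is an induced matching in $\mathcal{H}\setminus S$, then $\mathcal{S}$ is an induced matching in $\mathcal{H}$. In particular, if $\mathcal{S}$ is a self disjoint set in $\mathcal{H}\setminus S$, then $\mathcal{S}$ is a self disjoint set in $\mathcal{H}$.
   Context: A simple hypergraph $\mathcal{H}$ is a set $\mathcal{E}(\mathcal{H})$ of subsets (edges) of a finite vertex set, each of cardinality at least $2$, none contained in another; $d$-uniform means all edges have cardinality $d$. $\mathcal{H}\setminus S$ is the hypergraph with the same vertex set and edge set $\mathcal{E}(\mathcal{H})\setminus\{S\}$. For a vertex $x$, $N[x]=\{x\}\cup\{y:\{x,y\}\subseteq E\text{ for some edge }E\}$; $x$ is simplicial if every $d$-subset of $N[x]$ is an edge. A family $\mathcal{S}=\{S_1,\dots,S_i\}$ of distinct edges is an induced matching if the $S_\ell$ are pairwise disjoint and no edge outside $\mathcal{S}$ is contained in $\bigcup_\ell S_\ell$. $\mathcal{S}$ is a self disjoint set if (i) for all $k$, $S_k\nsubseteq\bigcup_{\ell\neq k}S_\ell$, and (ii) there is an induced matching $\mathcal{S}_0\subseteq\mathcal{S}$ such that for every $S_\ell\in\mathcal{S}\setminus\mathcal{S}_0$ there is $S'\in\mathcal{S}_0$ with $|S_\ell\setminus S'|=1$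 (all notions relative to the ambient hypergraph). *)

theory Defs
  imports Main
begin

definition simple_hypergraph :: "'a set \<Rightarrow> 'a set set \<Rightarrow> bool" where
  "simple_hypergraph V E \<longleftrightarrow> finite V \<and> (\<forall>e\<in>E. e \<subseteq> V \<and> card e \<ge> 2)
     \<and> (\<forall>e\<in>E. \<forall>e'\<in>E. e \<subseteq> e' \<longrightarrow> e = e')"

definition uniform :: "nat \<Rightarrow> 'a set set \<Rightarrow> bool" where
  "uniform d E \<longleftrightarrow> (\<forall>e\<in>E. card e = d)"

definition del_edge :: "'a set set \<Rightarrow> 'a set \<Rightarrow> 'a set set" where
  "del_edge E S = E - {S}"

definition closed_nbhd :: "'a set set \<Rightarrow> 'a \<Rightarrow> 'a set" where
  "closed_nbhd E x = {x} \<union> {y. \<exists>e\<in>E. {x, y} \<subseteq> e}"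

definition simplicial :: "nat \<Rightarrow> 'a set set \<Rightarrow> 'a \<Rightarrow> bool" where
  "simplicial d E x \<longleftrightarrow> (\<forall>T. T \<subseteq> closed_nbhd E x \<and> card T = d \<longrightarrow> T \<in> E)"

definition induced_matching :: "'a set set \<Rightarrow> 'a set set \<Rightarrow> bool" where
  "induced_matching E \<S> \<longleftrightarrow> \<S> \<subseteq> E
     \<and> (\<forall>A\<in>\<S>. \<forall>B\<in>\<S>. A \<noteq> B \<longrightarrow> A \<inter> B = {})
     \<and> (\<forall>e\<in>E. e \<subseteq> \<Union>\<S> \<longrightarrow> e \<in> \<S>)"

definition self_disjoint :: "'a set set \<Rightarrow> 'a set set \<Rightarrow> bool" where
  "self_disjoint E \<S> \<longleftrightarrow> \<S> \<subseteq> E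
     \<and> (\<forall>A\<in>\<S>. \<not> A \<subseteq> \<Union>(\<S> - {A}))
     \<and> (\<exists>\<S>0 \<subseteq> \<S>. induced_matching E \<S>0
          \<and> (\<forall>A\<in>\<S> - \<S>0. \<exists>B\<in>\<S>0. card (A - B) = 1))"

end

theory Submission
  imports Defs
begin

text \<open>
  Restoring the edge \<open>S\<close> can only spoil an induced matching \<open>\<S>\<close> of \<open>H \ S\<close> if \<open>S \<subseteq> \<Union>\<S>\<close>.
  Suppose so, let \<open>A \<in> \<S>\<close> contain \<open>x\<close> and pick \<open>y \<in> S - A\<close>. As \<open>x\<close> is simplicial, exchanging
  \<open>x\<close> for \<open>y\<close> in \<open>A\<close> yields an edge \<open>T \<subseteq> \<Union>\<S>\<close>; it misses \<open>x\<close>, so \<open>T \<noteq> S\<close> and hence \<open>T \<in> \<S>\<close>.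
  But \<open>T \<noteq> A\<close> shares \<open>A - {x} \<noteq> {}\<close> with \<open>A\<close>, contradicting disjointness. Self disjoint
  sets transfer because their underlying induced matchings do.
\<close>

lemma edge_subset_closed_nbhd: "e \<in> E \<Longrightarrow> x \<in> e \<Longrightarrow> e \<subseteq> closed_nbhd E x"
  by (auto simp: closed_nbhd_def)

lemma card_insert_Diff_swap:
  assumes "x \<in> A" and "y \<notin> A"
  shows "card (insert y (A - {x})) = card A"
proof (cases "finite A")
  case True
  then have "card (insert y (A - {x})) = Suc (card (A - {x}))"
    using assms(2) by simp
  also have "\<dots> = card A"
    using card.remove[OF True assms(1)] by simp
  finally show ?thesis .
qed simp

lemma simplicial_swap_edge:
  assumes "simplicial d E x" and "uniform d E"
    and "A \<in> E" and "x \<in> A" and "y \<in> closed_nbhd E x" and "y \<notin> A"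
  shows "insert y (A - {x}) \<in> E"
proof -
  have "card (insert y (A - {x})) = d"
    using assms(2-6) card_insert_Diff_swap by (metis uniform_def)
  moreover have "insert y (A - {x}) \<subseteq> closed_nbhd E x"
    using edge_subset_closed_nbhd[OF assms(3,4)] assms(5) by blast
  ultimately show ?thesis
    using assms(1) unfolding simplicial_def by blast
qed

lemma induced_matching_del_edgeI:
  assumes "induced_matching (del_edge E S) \<S>" and "\<not> S \<subseteq> \<Union>\<S>"
  shows "induced_matching E \<S>"
  using assms unfolding induced_matching_def del_edge_def by auto

lemma simplicial_edge_not_covered:
  assumes "simple_hypergraph V E" and "uniform d E" and "simplicial d E x"
    and "S \<in> E" and "x \<in> S"
    and "induced_matching (del_edge E S) \<S>"
  shows "\<not> S \<subseteq> \<Union>\<S>"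
proof
  assume cover: "S \<subseteq> \<Union>\<S>"
  have sub: "\<S> \<subseteq> E - {S}"
    and disjoint: "\<forall>A\<in>\<S>. \<forall>B\<in>\<S>. A \<noteq> B \<longrightarrow> A \<inter> B = {}"
    and closed: "\<forall>e\<in>E - {S}. e \<subseteq> \<Union>\<S> \<longrightarrow> e \<in> \<S>"
    using assms(6) unfolding induced_matching_def del_edge_def by auto
  obtain A where A: "A \<in> \<S>" "x \<in> A"
    using cover \<open>x \<in> S\<close> by blast
  have "A \<in> E" "A \<noteq> S"
    using A(1) sub by auto
  have card_A: "card A \<ge> 2"
    using assms(1) \<open>A \<in> E\<close> unfolding simple_hypergraph_def by blast
  have "\<not> S \<subseteq> A"
    using assms(1,4) \<open>A \<in> E\<close> \<open>A \<noteq> S\<close> unfolding simple_hypergraph_def by blast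
  then obtain y where y: "y \<in> S" "y \<notin> A"
    by blast
  define T where "T = insert y (A - {x})"
  have "y \<in> closed_nbhd E x"
    using edge_subset_closed_nbhd[OF assms(4,5)] y(1) by blast
  then have "T \<in> E"
    unfolding T_def using simplicial_swap_edge[OF assms(3,2) \<open>A \<in> E\<close> A(2) _ y(2)] by blast
  moreover have "T \<noteq> S"
    using A(2) y(2) \<open>x \<in> S\<close> unfolding T_def by blast
  moreover have "T \<subseteq> \<Union>\<S>"
    using A(1) y(1) cover unfolding T_def by blast
  ultimately have "T \<in> \<S>"
    using closed by blast
  moreover have "T \<noteq> A"
    using y unfolding T_def by blast
  ultimately have "T \<inter> A = {}"
    using disjoint A(1) by blast
  moreover have "A - {x} \<noteq> {}"
  proof
    assume "A - {x} = {}"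
    then have "card A \<le> card {x}"
      by (intro card_mono) auto
    with card_A show False
      by simp
  qed
  ultimately show False
    unfolding T_def by blast
qed

lemma self_disjoint_mono:
  assumes "E' \<subseteq> E"
    and "\<And>\<T>. induced_matching E' \<T> \<Longrightarrow> induced_matching E \<T>"
    and "self_disjoint E' \<S>"
  shows "self_disjoint E \<S>"
  using assms unfolding self_disjoint_def by blast

theorem lemma3p3:
  fixes V :: "'a set" and E :: "'a set set" and d :: nat and x :: 'a and S :: "'a set"
  assumes "d \<ge> 2"
    and "simple_hypergraph V E"
    and "uniform d E"
    and "\<forall>A\<in>E. \<forall>B\<in>E. A \<noteq> B \<and> A \<inter> B \<noteq> {} \<longrightarrow> card (A \<inter> B) = d - 1"
    and "x \<in> V"
    and "simplicial d E x"
    and "S \<in> E" and "x \<in> S"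
  shows "(\<forall>\<S>. induced_matching (del_edge E S) \<S> \<longrightarrow> induced_matching E \<S>)
       \<and> (\<forall>\<S>. self_disjoint (del_edge E S) \<S> \<longrightarrow> self_disjoint E \<S>)"
proof -
  have matching: "induced_matching E \<S>" if "induced_matching (del_edge E S) \<S>" for \<S>
    using induced_matching_del_edgeI[OF that]
      simplicial_edge_not_covered[OF assms(2,3,6,7,8) that] by blast
  moreover have "self_disjoint E \<S>" if "self_disjoint (del_edge E S) \<S>" for \<S>
    using self_disjoint_mono[OF _ matching that] by (auto simp: del_edge_def)
  ultimately show ?thesis
    by blast
qed

end
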